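(* Let $G_0$ be one of $\mathrm{SL}(2,\mathbb R)$, $\mathrm{SL}(2,\mathbb C)$, or $\mathrm{SO}_e(n,1)$ with $n\ge2$, with Cartan decomposition $\mathfrak g_0=\mathfrak k_0\oplus\mathfrak s_0$ and maximal compact subgroup $K_0$. Let $G=G_0^3$, $H=\{(g,g,g)\}$, $K=K_0^3$, $\mathfrak s=\mathfrak s_0^3$, $\mathfrak h=\{(X,X,X):X\in\mathfrak g_0\}$. Let $\mathfrak a_1,\mathfrak a_2,\mathfrak a_3\subset\mathfrak s_0$ be maximal abelian subspaces and $\mathfrak a=\mathfrak a_1\times\mathfrak a_2\times\mathfrak a_3$. Then $\mathfrak s=\mathrm{Ad}(K\cap H)\mathfrak a+\mathfrak s\cap\mathfrak h$ holds if and only if $\dim(\mathfrak a_1+\mathfrak a_2+\mathfrak a_3)=2$.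
   Context: $\mathrm{Ad}(K\cap H)\mathfrak a=\{\mathrm{Ad}(k)X: k\in K\cap H, X\in\mathfrak a\}$ (a subset, not necessarily a subspace), and the sum denotes $\{Z+T: Z\in\mathrm{Ad}(K\cap H)\mathfrak a, T\in\mathfrak s\cap\mathfrak h\}$. *)

theory Defs
  imports "HOL-Analysis.Analysis"
begin

definition Ad :: "'a::real_normed_field^'n^'n \<Rightarrow> 'a^'n^'n \<Rightarrow> 'a^'n^'n" where
  "Ad k X = k ** X ** matrix_inv k"

definition max_abelian :: "('a::real_normed_field^'n^'n) set \<Rightarrow> ('a^'n^'n) set \<Rightarrow> bool" where
  "max_abelian s a \<longleftrightarrow>
     subspace a \<and> a \<subseteq> s \<and> (\<forall>X\<in>a. \<forall>Y\<in>a. X ** Y - Y ** X = 0) \<and>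
     (\<forall>b. subspace b \<and> a \<subseteq> b \<and> b \<subseteq> s \<and> (\<forall>X\<in>b. \<forall>Y\<in>b. X ** Y - Y ** X = 0) \<longrightarrow> b = a)"

(* The condition  s = Ad(K \<inter> H) a + (s \<inter> h)  for G = G0^3, H = diagonal,
   s = s0^3, K = K0^3, a = a1 \<times> a2 \<times> a3; K \<inter> H = {(k,k,k). k \<in> K0},
   s \<inter> h = {(T,T,T). T \<in> s0}. *)
definition decomp_holds ::
  "('a::real_normed_field^'n^'n) set \<Rightarrow> ('a^'n^'n) set \<Rightarrow> ('a^'n^'n) set \<Rightarrow> ('a^'n^'n) set \<Rightarrow> ('a^'n^'n) set \<Rightarrow> bool" where
  "decomp_holds s0 K0 a1 a2 a3 \<longleftrightarrow>
     s0 \<times> s0 \<times> s0 =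
       {(Ad k X1 + T, Ad k X2 + T, Ad k X3 + T) | k X1 X2 X3 T.
          k \<in> K0 \<and> X1 \<in> a1 \<and> X2 \<in> a2 \<and> X3 \<in> a3 \<and> T \<in> s0}"

definition sum3 :: "'b::plus set \<Rightarrow> 'b set \<Rightarrow> 'b set \<Rightarrow> 'b set" where
  "sum3 A B C = {x + y + z | x y z. x \<in> A \<and> y \<in> B \<and> z \<in> C}"

definition SL2R :: "(real^2^2) set" where "SL2R = {g. det g = 1}"
definition sl2R :: "(real^2^2) set" where "sl2R = {X. trace X = 0}"
definition K_SL2R :: "(real^2^2) set" where
  "K_SL2R = {k \<in> SL2R. transpose k ** k = mat 1}"
definition s_SL2R :: "(real^2^2) set" where
  "s_SL2R = {X \<in> sl2R. transpose X = X}"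

definition ctrans :: "complex^'n^'n \<Rightarrow> complex^'n^'n" where
  "ctrans X = (\<chi> i j. cnj (X $ j $ i))"
definition SL2C :: "(complex^2^2) set" where "SL2C = {g. det g = 1}"
definition sl2C :: "(complex^2^2) set" where "sl2C = {X. trace X = 0}"
definition K_SL2C :: "(complex^2^2) set" where
  "K_SL2C = {k \<in> SL2C. ctrans k ** k = mat 1}"
definition s_SL2C :: "(complex^2^2) set" where
  "s_SL2C = {X \<in> sl2C. ctrans X = X}"

(* ---------- SO_e(n,1), index type 'n option, None = the time coordinate ---------- *)
definition Jform :: "real^('n::finite option)^('n option)" where
  "Jform = (\<chi> i j. if i = j then (if i = None then -1 else 1) else 0)"
definition SOe :: "(real^('n::finite option)^('n option)) set" where
  "SOe = {g. transpose g ** Jform ** g = Jform \<and> det g = 1 \<and> g $ None $ None > 0}"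
definition so_n1 :: "(real^('n::finite option)^('n option)) set" where
  "so_n1 = {X. transpose X ** Jform + Jform ** X = 0}"
definition K_SOe :: "(real^('n::finite option)^('n option)) set" where
  "K_SOe = {k \<in> SOe. transpose k ** k = mat 1}"
definition s_SOe :: "(real^('n::finite option)^('n option)) set" where
  "s_SOe = {X \<in> so_n1. transpose X = X}"

definition lemma_for :: "('a::real_normed_field^'n^'n) set \<Rightarrow> ('a^'n^'n) set \<Rightarrow> bool" where
  "lemma_for s0 K0 \<longleftrightarrow>
     (\<forall>a1 a2 a3. max_abelian s0 a1 \<and> max_abelian s0 a2 \<and> max_abelian s0 a3 \<longrightarrow>
        (decomp_holds s0 K0 a1 a2 a3 \<longleftrightarrow> dim (sum3 a1 a2 a3) = 2))"

end

theory Submission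
  imports Defs
begin

(* In each of the three cases s0 is parametrized linearly by a Euclidean space V (of dimension 2,
   3 and n) in which two elements commute iff they are parallel, so a maximal abelian subspace is a
   line R u, and Ad(K0) acts on V through a group containing every plane rotation.  Absorbing the
   first component into the diagonal part T, the decomposition says that every pair (y2, y3) in V^2
   is g (c2 u2 - c1 u1, c3 u3 - c1 u1) for some rotation g.  If u1, u2, u3 span a line, two
   orthogonal vectors are not of this form; if they span a 3-space, (b, 2 b) is not.  If they span
   a plane P, first rotate y2 and y3 into P; inside P the admissible pairs form a hyperplane of
   P x P, and its defining linear functional restricted to the orbit under the rotations of P is
   a combination of cos t and sin t, which has a zero. *)

lemma span_pair_coords:
  assumes "x \<in> span {e, f}"
  obtains a b where "x = a *\<^sub>R e + b *\<^sub>R f"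
proof -
  obtain a where "x - a *\<^sub>R e \<in> span {f}" using assms span_breakdown_eq by blast
  then obtain b where "x - a *\<^sub>R e = b *\<^sub>R f" by (auto simp: span_singleton)
  then show ?thesis using that[of a b] by (simp add: algebra_simps)
qed

lemma proportional_coords:
  fixes p1 q1 p2 q2 :: real
  assumes "p1 \<noteq> 0 \<or> q1 \<noteq> 0" and "p1 * q2 - q1 * p2 = 0"
  shows "\<exists>s. p2 = s * p1 \<and> q2 = s * q1"
proof -
  have "p1 * p1 + q1 * q1 \<noteq> 0" using assms(1) sum_squares_gt_zero_iff[of p1 q1] by linarith
  moreover have "p2 * (p1 * p1 + q1 * q1) = (p1 * p2 + q1 * q2) * p1"
    "q2 * (p1 * p1 + q1 * q1) = (p1 * p2 + q1 * q2) * q1"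
    using assms(2) by (simp_all add: algebra_simps)
  ultimately have "p2 = (p1 * p2 + q1 * q2) / (p1 * p1 + q1 * q1) * p1 \<and>
                   q2 = (p1 * p2 + q1 * q2) / (p1 * p1 + q1 * q1) * q1"
    by (simp add: field_simps)
  then show ?thesis by blast
qed

lemma span_three:
  "span {a, b, c} = {x + y + z | x y z. x \<in> span {a} \<and> y \<in> span {b} \<and> z \<in> span {c}}"
proof -
  have "{a, b, c} = {a} \<union> {b, c}" "{b, c} = {b} \<union> {c}" by auto
  then have "span {a, b, c} = {x + w | x w. x \<in> span {a} \<and> w \<in> span {b, c}}"
    and "span {b, c} = {y + z | y z. y \<in> span {b} \<and> z \<in> span {c}}"
    by (simp_all only: span_Un)
  then show ?thesis by (auto simp: add.assoc)
qed

lemma dim_three_le_2_if_in_span: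
  fixes x y z :: "'v::real_vector"
  assumes "x \<in> span {y, z}"
  shows "dim {x, y, z} \<le> 2"
proof -
  have "dim {x, y, z} = dim {y, z}" using assms by (metis dim_span span_redundant)
  also have "\<dots> \<le> card {y, z}" by (rule dim_le_card') simp
  also have "\<dots> \<le> 2" by (simp add: card_insert_le_m1)
  finally show ?thesis .
qed

lemma dim_three_eq_3_coeffs_zero:
  fixes u1 u2 u3 :: "'v::real_vector"
  assumes "dim {u1, u2, u3} = 3" and "a *\<^sub>R u1 + b *\<^sub>R u2 + c *\<^sub>R u3 = 0"
  shows "a = 0 \<and> b = 0 \<and> c = 0"
proof -
  have in_span: "x \<in> span S" if "r \<noteq> 0" "r *\<^sub>R x \<in> span S" for r x and S :: "'v set"
    using span_scale[OF that(2), of "1 / r"] that(1) by simp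
  have lincomb: "p *\<^sub>R y + q *\<^sub>R z \<in> span {y, z}" for p q and y z :: 'v
    by (intro span_add span_scale) (simp_all add: span_base)
  have "a *\<^sub>R u1 = (- b) *\<^sub>R u2 + (- c) *\<^sub>R u3" "b *\<^sub>R u2 = (- a) *\<^sub>R u1 + (- c) *\<^sub>R u3"
    "c *\<^sub>R u3 = (- a) *\<^sub>R u1 + (- b) *\<^sub>R u2"
    using assms(2) by (simp_all add: eq_neg_iff_add_eq_0 algebra_simps flip: minus_add_distrib)
  then have "a \<noteq> 0 \<Longrightarrow> u1 \<in> span {u2, u3}" "b \<noteq> 0 \<Longrightarrow> u2 \<in> span {u1, u3}"
      "c \<noteq> 0 \<Longrightarrow> u3 \<in> span {u1, u2}"
    using in_span lincomb by metis+
  moreover have "{u2, u1, u3} = {u1, u2, u3}" "{u3, u1, u2} = {u1, u2, u3}" by auto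
  ultimately show ?thesis
    using dim_three_le_2_if_in_span[of u1 u2 u3] dim_three_le_2_if_in_span[of u2 u1 u3]
          dim_three_le_2_if_in_span[of u3 u1 u2] assms(1) by fastforce
qed

lemma vec_products_symmetric_iff_parallel:
  fixes u w :: "real^'n"
  shows "(\<forall>i j. u$i * w$j = w$i * u$j) \<longleftrightarrow> u = 0 \<or> (\<exists>c. w = c *\<^sub>R u)"
proof
  assume h: "\<forall>i j. u$i * w$j = w$i * u$j"
  show "u = 0 \<or> (\<exists>c. w = c *\<^sub>R u)"
  proof (cases "u = 0")
    case False
    then obtain i where "u$i \<noteq> 0" by (auto simp: vec_eq_iff)
    then have "w = (w$i / u$i) *\<^sub>R u" using h by (auto simp: vec_eq_iff field_simps)
    then show ?thesis by blast
  qed simp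
qed auto

section \<open>Plane rotations\<close>

definition orthonormal_pair :: "'v::real_inner \<Rightarrow> 'v \<Rightarrow> bool" where
  "orthonormal_pair e f \<longleftrightarrow> e \<bullet> e = 1 \<and> f \<bullet> f = 1 \<and> e \<bullet> f = 0"

definition plane_rotation :: "'v::real_inner \<Rightarrow> 'v \<Rightarrow> real \<Rightarrow> 'v \<Rightarrow> 'v" where
  "plane_rotation e f t x = x + ((cos t - 1) * (x \<bullet> e) - sin t * (x \<bullet> f)) *\<^sub>R e
                                + ((cos t - 1) * (x \<bullet> f) + sin t * (x \<bullet> e)) *\<^sub>R f"

lemma plane_rotation_0 [simp]: "plane_rotation e f 0 x = x"
  by (simp add: plane_rotation_def)

lemma plane_rotation_fixes_orthogonal: "x \<bullet> e = 0 \<Longrightarrow> x \<bullet> f = 0 \<Longrightarrow> plane_rotation e f t x = x"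
  by (simp add: plane_rotation_def)

lemma linear_plane_rotation: "linear (plane_rotation e f t)"
  by (rule linearI) (simp_all add: plane_rotation_def algebra_simps)

lemma plane_rotation_in_plane:
  assumes "orthonormal_pair e f"
  shows "plane_rotation e f t (a *\<^sub>R e + b *\<^sub>R f)
           = (cos t * a - sin t * b) *\<^sub>R e + (sin t * a + cos t * b) *\<^sub>R f"
  using assms unfolding plane_rotation_def orthonormal_pair_def
  by (simp add: inner_commute algebra_simps)

lemma plane_rotation_add:
  assumes "orthonormal_pair e f"
  shows "plane_rotation e f s (plane_rotation e f t x) = plane_rotation e f (s + t) x"
proof -
  have e: "plane_rotation e f t x \<bullet> e = cos t * (x \<bullet> e) - sin t * (x \<bullet> f)"
    and f: "plane_rotation e f t x \<bullet> f = sin t * (x \<bullet> e) + cos t * (x \<bullet> f)"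
    using assms by (simp_all add: plane_rotation_def orthonormal_pair_def inner_commute algebra_simps)
  show ?thesis
    unfolding plane_rotation_def[of e f s] e f
    by (simp add: plane_rotation_def cos_add sin_add algebra_simps)
qed

lemma norm_plane_rotation:
  assumes "orthonormal_pair e f"
  shows "norm (plane_rotation e f t x) = norm x"
proof -
  have "plane_rotation e f t x \<bullet> plane_rotation e f t x
          = x \<bullet> x + (cos t * cos t + sin t * sin t - 1) * ((x \<bullet> e)\<^sup>2 + (x \<bullet> f)\<^sup>2)"
    using assms unfolding plane_rotation_def orthonormal_pair_def
    by (simp add: inner_commute algebra_simps power2_eq_square
             del: sin_cos_squared_add3)
  then show ?thesis by (simp add: norm_eq_sqrt_inner)
qed

inductive_set plane_rotation_group :: "('v::real_inner \<Rightarrow> 'v) set" where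
  identity: "id \<in> plane_rotation_group"
| rotate: "orthonormal_pair e f \<Longrightarrow> g \<in> plane_rotation_group
             \<Longrightarrow> plane_rotation e f t \<circ> g \<in> plane_rotation_group"

lemma plane_rotation_in_group: "orthonormal_pair e f \<Longrightarrow> plane_rotation e f t \<in> plane_rotation_group"
  using plane_rotation_group.rotate[OF _ plane_rotation_group.identity] by fastforce

lemma plane_rotation_group_linear: "g \<in> plane_rotation_group \<Longrightarrow> linear g"
proof (induction rule: plane_rotation_group.induct)
  case (rotate e f g t)
  then show ?case using linear_compose[OF _ linear_plane_rotation] by blast
qed (simp add: id_def linear_ident)

lemma plane_rotation_group_comp:
  "g \<in> plane_rotation_group \<Longrightarrow> h \<in> plane_rotation_group \<Longrightarrow> g \<circ> h \<in> plane_rotation_group"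
  by (induction rule: plane_rotation_group.induct)
     (simp_all add: comp_assoc plane_rotation_group.rotate)

lemma plane_rotation_group_inverse:
  "g \<in> plane_rotation_group \<Longrightarrow> \<exists>h\<in>plane_rotation_group. \<forall>x. h (g x) = x"
proof (induction rule: plane_rotation_group.induct)
  case identity
  show ?case using plane_rotation_group.identity by (metis id_apply)
next
  case (rotate e f g t)
  then obtain h where h: "h \<in> plane_rotation_group" "\<forall>x. h (g x) = x" by blast
  have "h \<circ> plane_rotation e f (- t) \<in> plane_rotation_group"
    using plane_rotation_group_comp[OF h(1) plane_rotation_in_group[OF rotate.hyps(1)]] .
  moreover have "(h \<circ> plane_rotation e f (- t)) ((plane_rotation e f t \<circ> g) x) = x" for x
    using h(2) by (simp add: plane_rotation_add[OF rotate.hyps(1)])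
  ultimately show ?case by blast
qed

lemma rotate_into_line:
  fixes t x :: "'v::real_inner"
  assumes "norm t = 1"
  shows "\<exists>g\<in>plane_rotation_group. g x \<in> span {t} \<and> (\<forall>z. z \<bullet> x = 0 \<longrightarrow> z \<bullet> t = 0 \<longrightarrow> g z = z)"
proof (cases "x \<in> span {t}")
  case True
  then show ?thesis using plane_rotation_group.identity by (intro bexI[of _ id]) auto
next
  case False
  then have "x \<noteq> 0" using span_zero by auto
  have tt: "t \<bullet> t = 1" using assms by (simp add: norm_eq_1)
  define w where "w = x /\<^sub>R norm x"
  have ww: "w \<bullet> w = 1" using \<open>x \<noteq> 0\<close> by (simp add: w_def dot_square_norm power2_eq_square)
  have xw: "x = norm x *\<^sub>R w" using \<open>x \<noteq> 0\<close> by (simp add: w_def)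
  define h where "h = t - (t \<bullet> w) *\<^sub>R w"
  have "h \<noteq> 0"
  proof
    assume "h = 0"
    then have "t = (t \<bullet> w) *\<^sub>R w" by (simp add: h_def)
    moreover have "t \<bullet> w \<noteq> 0" using tt calculation by (metis inner_zero_left scaleR_zero_left zero_neq_one)
    ultimately have "x = (norm x / (t \<bullet> w)) *\<^sub>R t" using xw by (metis scaleR_scaleR nonzero_eq_divide_eq)
    then show False using False by (metis span_base span_scale singletonI)
  qed
  define g where "g = h /\<^sub>R norm h"
  have o: "orthonormal_pair w g" using ww \<open>h \<noteq> 0\<close>
    by (simp add: orthonormal_pair_def g_def h_def dot_square_norm power2_eq_square inner_diff_right inner_commute)
  have "(norm h)\<^sup>2 = 1 - (t \<bullet> w)\<^sup>2" unfolding power2_norm_eq_inner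
    using tt ww by (simp add: h_def inner_diff_left inner_diff_right inner_commute power2_eq_square)
  then have "(t \<bullet> w)\<^sup>2 + (norm h)\<^sup>2 = 1" by simp
  then obtain \<theta> where c: "t \<bullet> w = cos \<theta>" and s: "norm h = sin \<theta>" by (rule sincos_total_2pi) auto
  have "plane_rotation w g \<theta> w = t"
    using plane_rotation_in_plane[OF o, of \<theta> 1 0] \<open>h \<noteq> 0\<close> by (simp add: g_def h_def c[symmetric] s[symmetric])
  then have "plane_rotation w g \<theta> x = norm x *\<^sub>R t"
    using xw linear_scale[OF linear_plane_rotation] by metis
  then have "plane_rotation w g \<theta> x \<in> span {t}" by (simp add: span_base span_scale)
  moreover have "plane_rotation w g \<theta> z = z" if "z \<bullet> x = 0" "z \<bullet> t = 0" for z
    using that by (intro plane_rotation_fixes_orthogonal) (simp_all add: g_def h_def w_def inner_diff_right)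
  ultimately show ?thesis using plane_rotation_in_group[OF o] by blast
qed

lemma rotate_pair_into_plane:
  fixes U V :: "'v::real_inner"
  assumes o: "orthonormal_pair e f"
  shows "\<exists>g\<in>plane_rotation_group. g U \<in> span {e, f} \<and> g V \<in> span {e, f}"
proof -
  have "norm e = 1" "norm f = 1" using o by (simp_all add: orthonormal_pair_def norm_eq_1)
  obtain g1 where g1: "g1 \<in> plane_rotation_group" "g1 U \<in> span {e}"
    using rotate_into_line[OF \<open>norm e = 1\<close>] by blast
  then obtain a where a: "g1 U = a *\<^sub>R e" by (auto simp: span_singleton)
  define W where "W = g1 V - (g1 V \<bullet> e) *\<^sub>R e"
  have "e \<bullet> W = 0" using o by (simp add: W_def orthonormal_pair_def inner_diff_right inner_commute)
  obtain g2 where g2: "g2 \<in> plane_rotation_group" "g2 W \<in> span {f}"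
      "\<And>z. z \<bullet> W = 0 \<Longrightarrow> z \<bullet> f = 0 \<Longrightarrow> g2 z = z"
    using rotate_into_line[OF \<open>norm f = 1\<close>, of W] by blast
  have "g2 e = e" using g2(3) \<open>e \<bullet> W = 0\<close> o by (simp add: orthonormal_pair_def)
  have "linear g2" using g2(1) by (rule plane_rotation_group_linear)
  have "g2 (g1 U) = a *\<^sub>R e" using a \<open>g2 e = e\<close> linear_scale[OF \<open>linear g2\<close>] by metis
  moreover have "g2 (g1 V) = g2 W + (g1 V \<bullet> e) *\<^sub>R e"
    using \<open>g2 e = e\<close> linear_add[OF \<open>linear g2\<close>] linear_scale[OF \<open>linear g2\<close>]
    by (metis W_def diff_add_cancel)
  moreover have "e \<in> span {e, f}" "span {f} \<subseteq> span {e, f}" by (simp_all add: span_base span_mono)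
  ultimately have "g2 (g1 U) \<in> span {e, f}" "g2 (g1 V) \<in> span {e, f}"
    using g2(2) by (auto intro!: span_add span_scale)
  then show ?thesis using plane_rotation_group_comp[OF g2(1) g1(1)] by (intro bexI[of _ "g2 \<circ> g1"]) auto
qed

section \<open>Rotating a pair onto prescribed differences\<close>

lemma exists_root_cos_sin: "\<exists>t. \<alpha> * cos t + \<beta> * sin t = (0::real)"
proof (cases "\<alpha> = 0 \<and> \<beta> = 0")
  case False
  define r where "r = sqrt (\<alpha>\<^sup>2 + \<beta>\<^sup>2)"
  have "r > 0" using False unfolding r_def by (auto simp: add_pos_nonneg add_nonneg_pos)
  moreover have "(\<beta> / r)\<^sup>2 + (- \<alpha> / r)\<^sup>2 = 1"
    using \<open>r > 0\<close> False unfolding r_def by (simp add: power_divide add_divide_distrib[symmetric])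
  then obtain t where "\<beta> / r = cos t" "- \<alpha> / r = sin t" by (rule sincos_total_2pi) auto
  ultimately have "\<alpha> = - r * sin t" "\<beta> = r * cos t" by (simp_all add: field_simps)
  then have "\<alpha> * cos t + \<beta> * sin t = 0" by (simp add: algebra_simps)
  then show ?thesis ..
qed auto

(* In coordinates of a plane: u_i = (p_i, q_i), the two vectors to be rotated are (a1, b1) and (a2, b2). *)
lemma rotation_onto_differences_coords_if_det12:
  fixes p1 q1 p2 q2 p3 q3 a1 b1 a2 b2 :: real
  assumes "p3 \<noteq> 0 \<or> q3 \<noteq> 0" and "p1 * q2 - q1 * p2 \<noteq> 0"
  shows "\<exists>t c1 c2 c3.
           cos t * a1 - sin t * b1 = c2 * p2 - c1 * p1 \<and> sin t * a1 + cos t * b1 = c2 * q2 - c1 * q1 \<and>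
           cos t * a2 - sin t * b2 = c3 * p3 - c1 * p1 \<and> sin t * a2 + cos t * b2 = c3 * q3 - c1 * q1"
proof -
  define d12 where "d12 = p1 * q2 - q1 * p2"
  define d13 where "d13 = p1 * q3 - q1 * p3"
  have "d12 \<noteq> 0" using assms(2) by (simp add: d12_def)
  \<comment> \<open>The admissible pairs are the kernel of one linear functional on the plane squared;
      along the rotation it is a combination of cos t and sin t.\<close>
  obtain t where t: "(d12 * (q3 * a2 - p3 * b2) + d13 * (p2 * b1 - q2 * a1)) * cos t
                   + (d12 * (- q3 * b2 - p3 * a2) + d13 * (p2 * a1 + q2 * b1)) * sin t = 0"
    using exists_root_cos_sin by blast
  define z1 where "z1 = cos t * a1 - sin t * b1"
  define z2 where "z2 = sin t * a1 + cos t * b1"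
  define z3 where "z3 = cos t * a2 - sin t * b2"
  define z4 where "z4 = sin t * a2 + cos t * b2"
  define c1 where "c1 = (p2 * z2 - q2 * z1) / d12"
  define c2 where "c2 = (p1 * z2 - q1 * z1) / d12"
  have "d12 * (z3 * q3 - z4 * p3) + d13 * (p2 * z2 - q2 * z1) = 0"
    using t unfolding z1_def z2_def z3_def z4_def by (simp add: algebra_simps)
  then have par: "(z3 + c1 * p1) * q3 = (z4 + c1 * q1) * p3"
    using \<open>d12 \<noteq> 0\<close> unfolding c1_def d13_def by (simp add: field_simps)
  define c3 where "c3 = (if p3 \<noteq> 0 then (z3 + c1 * p1) / p3 else (z4 + c1 * q1) / q3)"
  have "z3 = c3 * p3 - c1 * p1 \<and> z4 = c3 * q3 - c1 * q1"
  proof (cases "p3 = 0")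
    case True
    moreover have "q3 \<noteq> 0" using True assms(1) by simp
    moreover have "z3 + c1 * p1 = 0" using True par \<open>q3 \<noteq> 0\<close> by simp
    ultimately show ?thesis unfolding c3_def by (simp add: field_simps)
  next
    case False
    with par show ?thesis unfolding c3_def by (simp add: field_simps)
  qed
  moreover have "(p1 * z2 - q1 * z1) * p2 - (p2 * z2 - q2 * z1) * p1 = z1 * d12"
    "(p1 * z2 - q1 * z1) * q2 - (p2 * z2 - q2 * z1) * q1 = z2 * d12"
    unfolding d12_def by (simp_all add: algebra_simps)
  then have "z1 = c2 * p2 - c1 * p1" "z2 = c2 * q2 - c1 * q1"
    using \<open>d12 \<noteq> 0\<close> unfolding c1_def c2_def by (simp_all add: field_simps)
  ultimately show ?thesis unfolding z1_def z2_def z3_def z4_def by blast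
qed

lemma rotation_onto_differences_coords:
  fixes p1 q1 p2 q2 p3 q3 a1 b1 a2 b2 :: real
  assumes "p2 \<noteq> 0 \<or> q2 \<noteq> 0" "p3 \<noteq> 0 \<or> q3 \<noteq> 0"
    and "p1 * q2 - q1 * p2 \<noteq> 0 \<or> p1 * q3 - q1 * p3 \<noteq> 0"
  shows "\<exists>t c1 c2 c3.
           cos t * a1 - sin t * b1 = c2 * p2 - c1 * p1 \<and> sin t * a1 + cos t * b1 = c2 * q2 - c1 * q1 \<and>
           cos t * a2 - sin t * b2 = c3 * p3 - c1 * p1 \<and> sin t * a2 + cos t * b2 = c3 * q3 - c1 * q1"
  using assms(3)
proof
  assume "p1 * q2 - q1 * p2 \<noteq> 0"
  then show ?thesis using rotation_onto_differences_coords_if_det12[OF assms(2)] by blast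
next
  assume "p1 * q3 - q1 * p3 \<noteq> 0"
  then show ?thesis using rotation_onto_differences_coords_if_det12[OF assms(1)] by blast
qed

lemma plane_rotation_onto_differences:
  assumes o: "orthonormal_pair e f"
    and in_plane: "u1 \<in> span {e, f}" "u2 \<in> span {e, f}" "u3 \<in> span {e, f}"
                  "U \<in> span {e, f}" "V \<in> span {e, f}"
    and nonzero: "u1 \<noteq> 0" "u2 \<noteq> 0" "u3 \<noteq> 0" and "dim {u1, u2, u3} = 2"
  shows "\<exists>t c1 c2 c3. plane_rotation e f t U = c2 *\<^sub>R u2 - c1 *\<^sub>R u1
                    \<and> plane_rotation e f t V = c3 *\<^sub>R u3 - c1 *\<^sub>R u1"
proof -
  obtain p1 q1 where u1: "u1 = p1 *\<^sub>R e + q1 *\<^sub>R f" using span_pair_coords[OF in_plane(1)] .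
  obtain p2 q2 where u2: "u2 = p2 *\<^sub>R e + q2 *\<^sub>R f" using span_pair_coords[OF in_plane(2)] .
  obtain p3 q3 where u3: "u3 = p3 *\<^sub>R e + q3 *\<^sub>R f" using span_pair_coords[OF in_plane(3)] .
  obtain a1 b1 where U: "U = a1 *\<^sub>R e + b1 *\<^sub>R f" using span_pair_coords[OF in_plane(4)] .
  obtain a2 b2 where V: "V = a2 *\<^sub>R e + b2 *\<^sub>R f" using span_pair_coords[OF in_plane(5)] .
  have pq: "p1 \<noteq> 0 \<or> q1 \<noteq> 0" "p2 \<noteq> 0 \<or> q2 \<noteq> 0" "p3 \<noteq> 0 \<or> q3 \<noteq> 0"
    using nonzero u1 u2 u3 by auto
  have "p1 * q2 - q1 * p2 \<noteq> 0 \<or> p1 * q3 - q1 * p3 \<noteq> 0"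
  proof (rule ccontr)
    assume "\<not> (p1 * q2 - q1 * p2 \<noteq> 0 \<or> p1 * q3 - q1 * p3 \<noteq> 0)"
    then obtain s2 s3 where "p2 = s2 * p1 \<and> q2 = s2 * q1" "p3 = s3 * p1 \<and> q3 = s3 * q1"
      using proportional_coords[OF pq(1)] by metis
    then have "u2 = s2 *\<^sub>R u1" "u3 = s3 *\<^sub>R u1" using u1 u2 u3 by (simp_all add: algebra_simps)
    then have "{u1, u2, u3} \<subseteq> span {u1}" by (auto intro: span_base span_scale)
    then have "dim {u1, u2, u3} \<le> card {u1}" by (rule dim_le_card) simp
    then show False using \<open>dim {u1, u2, u3} = 2\<close> by simp
  qed
  then obtain t c1 c2 c3 where
    eqU: "cos t * a1 - sin t * b1 = c2 * p2 - c1 * p1" "sin t * a1 + cos t * b1 = c2 * q2 - c1 * q1" and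
    eqV: "cos t * a2 - sin t * b2 = c3 * p3 - c1 * p1" "sin t * a2 + cos t * b2 = c3 * q3 - c1 * q1"
    using rotation_onto_differences_coords[OF pq(2,3)] by blast
  have "plane_rotation e f t U = (c2 * p2 - c1 * p1) *\<^sub>R e + (c2 * q2 - c1 * q1) *\<^sub>R f"
    unfolding U plane_rotation_in_plane[OF o] eqU ..
  also have "\<dots> = c2 *\<^sub>R u2 - c1 *\<^sub>R u1" unfolding u1 u2 by (simp add: algebra_simps)
  moreover have "plane_rotation e f t V = (c3 * p3 - c1 * p1) *\<^sub>R e + (c3 * q3 - c1 * q1) *\<^sub>R f"
    unfolding V plane_rotation_in_plane[OF o] eqV ..
  moreover have "\<dots> = c3 *\<^sub>R u3 - c1 *\<^sub>R u1" unfolding u1 u3 by (simp add: algebra_simps)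
  ultimately show ?thesis by metis
qed

lemma exists_orthonormal_pair_spanning:
  fixes S :: "'v::euclidean_space set"
  assumes "dim S = 2"
  obtains e f where "orthonormal_pair e f" "span S = span {e, f}"
proof -
  obtain B where B: "pairwise orthogonal B" "\<And>x. x \<in> B \<Longrightarrow> norm x = 1"
      "card B = dim (span S)" "span B = span S"
    using orthonormal_basis_subspace[OF subspace_span] by metis
  then obtain e f where "B = {e, f}" "e \<noteq> f" using assms by (auto simp: card_2_iff)
  with B have "orthonormal_pair e f"
    by (auto simp: orthonormal_pair_def norm_eq_1 pairwise_def orthogonal_def)
  then show ?thesis using that B(4) \<open>B = {e, f}\<close> by metis
qed

lemma plane_rotation_group_onto_differences:
  fixes u1 u2 u3 U V :: "'v::euclidean_space"
  assumes nonzero: "u1 \<noteq> 0" "u2 \<noteq> 0" "u3 \<noteq> 0" and "dim {u1, u2, u3} = 2"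
  shows "\<exists>g\<in>plane_rotation_group. \<exists>c1 c2 c3.
           g (c2 *\<^sub>R u2 - c1 *\<^sub>R u1) = U \<and> g (c3 *\<^sub>R u3 - c1 *\<^sub>R u1) = V"
proof -
  obtain e f where o: "orthonormal_pair e f" and span_eq: "span {u1, u2, u3} = span {e, f}"
    using exists_orthonormal_pair_spanning[OF \<open>dim {u1, u2, u3} = 2\<close>] .
  have u: "u1 \<in> span {e, f}" "u2 \<in> span {e, f}" "u3 \<in> span {e, f}"
    unfolding span_eq[symmetric] by (simp_all add: span_base)
  obtain g where g: "g \<in> plane_rotation_group" "g U \<in> span {e, f}" "g V \<in> span {e, f}"
    using rotate_pair_into_plane[OF o] by blast
  obtain t c1 c2 c3 where
    "plane_rotation e f t (g U) = c2 *\<^sub>R u2 - c1 *\<^sub>R u1"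
    "plane_rotation e f t (g V) = c3 *\<^sub>R u3 - c1 *\<^sub>R u1"
    using plane_rotation_onto_differences[OF o u g(2,3) nonzero \<open>dim {u1, u2, u3} = 2\<close>] by blast
  moreover have "plane_rotation e f t \<circ> g \<in> plane_rotation_group"
    using g(1) o by (rule plane_rotation_group.rotate[rotated])
  then obtain h where "h \<in> plane_rotation_group" "\<forall>x. h (plane_rotation e f t (g x)) = x"
    using plane_rotation_group_inverse by fastforce
  ultimately show ?thesis by metis
qed

lemma matrix_add_rdistrib: "((A :: 'a::semiring_1^'n^'m) + B) ** C = A ** C + B ** C"
  by (vector matrix_matrix_mult_def sum.distrib[symmetric] field_simps)

lemma matrix_inv_unique:
  fixes A :: "'a::field^'n^'n"
  assumes "A ** B = mat 1"
  shows "matrix_inv A = B"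
proof -
  have "A ** B = mat 1 \<and> B ** A = mat 1" using assms matrix_left_right_inverse by blast
  then have inv: "A ** matrix_inv A = mat 1 \<and> matrix_inv A ** A = mat 1"
    unfolding matrix_inv_def by (rule someI)
  have "matrix_inv A = (matrix_inv A ** A) ** B" using assms by (simp flip: matrix_mul_assoc)
  then show ?thesis using inv by simp
qed

lemma Ad_eq_conj_right_inverse: "k ** k' = mat 1 \<Longrightarrow> Ad k X = k ** X ** k'"
  by (simp add: Ad_def matrix_inv_unique)

lemma Ad_mat_1 [simp]: "Ad (mat 1) X = X"
  by (simp add: Ad_eq_conj_right_inverse)

lemma linear_Ad: "linear (Ad k)"
  by (rule linearI)
     (simp_all add: Ad_def matrix_add_ldistrib matrix_add_rdistrib matrix_scalar_ac scalar_matrix_assoc)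

lemma Ad_mult:
  assumes "invertible k" "invertible k'"
  shows "Ad (k ** k') X = Ad k (Ad k' X)"
proof -
  obtain l l' where l: "k ** l = mat 1" "k' ** l' = mat 1"
    using assms by (auto simp: invertible_def)
  then have "(k ** k') ** (l' ** l) = mat 1" by (metis matrix_mul_assoc matrix_mul_rid)
  then have "Ad (k ** k') X = k ** k' ** X ** (l' ** l)" by (rule Ad_eq_conj_right_inverse)
  also have "\<dots> = Ad k (Ad k' X)" by (simp add: Ad_eq_conj_right_inverse[OF l(1)]
                                            Ad_eq_conj_right_inverse[OF l(2)] matrix_mul_assoc)
  finally show ?thesis .
qed

lemma inj_Ad:
  assumes "invertible k"
  shows "inj (Ad k)"
proof
  fix X Y assume "Ad k X = Ad k Y"
  obtain l where l: "l ** k = mat 1" "k ** l = mat 1" using assms by (auto simp: invertible_def)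
  have "Ad l (Ad k X) = X" for X
    unfolding Ad_eq_conj_right_inverse[OF l(1)] Ad_eq_conj_right_inverse[OF l(2)]
    by (metis l(1) matrix_mul_assoc matrix_mul_lid matrix_mul_rid)
  then show "X = Y" using \<open>Ad k X = Ad k Y\<close> by metis
qed

lemma Ad_orthogonal: "transpose k ** k = mat 1 \<Longrightarrow> Ad (k :: real^'n^'n) X = k ** X ** transpose k"
  by (simp add: Ad_eq_conj_right_inverse matrix_left_right_inverse)

lemma invertible_orthogonal: "transpose k ** k = mat 1 \<Longrightarrow> invertible (k :: real^'n^'n)"
  unfolding invertible_def by (metis matrix_left_right_inverse)

lemma orthogonal_mult:
  fixes k k' :: "real^'n^'n"
  assumes "transpose k ** k = mat 1" "transpose k' ** k' = mat 1"
  shows "transpose (k ** k') ** (k ** k') = mat 1"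
proof -
  have "transpose (k ** k') ** (k ** k') = transpose k' ** (transpose k ** k) ** k'"
    by (simp add: matrix_transpose_mul matrix_mul_assoc)
  then show ?thesis using assms by simp
qed

section \<open>Rank-one models\<close>

locale rank_one_model =
  fixes s0 :: "('a::real_normed_field^'n^'n) set" and K0 :: "('a^'n^'n) set"
    and L :: "'v::euclidean_space \<Rightarrow> 'a^'n^'n"
  assumes linear_L: "linear L" and inj_L: "inj L" and range_L: "range L = s0"
    and commute_iff_parallel: "\<And>x y. L x ** L y - L y ** L x = 0 \<longleftrightarrow> x = 0 \<or> (\<exists>c. y = c *\<^sub>R x)"
    and two_le_DIM: "2 \<le> DIM('v)"
    and invertible_K: "\<And>k. k \<in> K0 \<Longrightarrow> invertible k"
    and mat_1_in_K: "mat 1 \<in> K0"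
    and mult_in_K: "\<And>k k'. k \<in> K0 \<Longrightarrow> k' \<in> K0 \<Longrightarrow> k ** k' \<in> K0"
    and Ad_K_in_s0: "\<And>k X. k \<in> K0 \<Longrightarrow> X \<in> s0 \<Longrightarrow> Ad k X \<in> s0"
    and plane_rotation_realized:
      "\<And>e f t. orthonormal_pair e f \<Longrightarrow> \<exists>k\<in>K0. \<forall>x. Ad k (L x) = L (plane_rotation e f t x)"
begin

lemma subspace_s0: "subspace s0"
  using linear_subspace_image[OF linear_L subspace_UNIV] by (simp add: range_L)

lemma plane_rotation_group_realized:
  "g \<in> plane_rotation_group \<Longrightarrow> \<exists>k\<in>K0. \<forall>x. Ad k (L x) = L (g x)"
proof (induction rule: plane_rotation_group.induct)
  case identity
  show ?case using mat_1_in_K by (intro bexI[of _ "mat 1"]) auto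
next
  case (rotate e f g t)
  obtain k where k: "k \<in> K0" "\<forall>x. Ad k (L x) = L (g x)" using rotate.IH by blast
  obtain k' where k': "k' \<in> K0" "\<forall>x. Ad k' (L x) = L (plane_rotation e f t x)"
    using plane_rotation_realized[OF rotate.hyps(1)] by blast
  have "Ad (k' ** k) (L x) = L ((plane_rotation e f t \<circ> g) x)" for x
    using k k' by (simp add: Ad_mult invertible_K)
  then show ?case using mult_in_K[OF k'(1) k(1)] by blast
qed

lemma abelian_line: "\<forall>X\<in>L ` span {u}. \<forall>Y\<in>L ` span {u}. X ** Y - Y ** X = 0"
proof (intro ballI)
  fix X Y assume "X \<in> L ` span {u}" "Y \<in> L ` span {u}"
  then obtain c d where XY: "X = L (c *\<^sub>R u)" "Y = L (d *\<^sub>R u)" by (auto simp: span_singleton)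
  show "X ** Y - Y ** X = 0"
  proof (cases "c = 0")
    case False
    then have "d *\<^sub>R u = (d / c) *\<^sub>R (c *\<^sub>R u)" by simp
    then show ?thesis unfolding XY using commute_iff_parallel by blast
  qed (simp add: XY linear_0[OF linear_L])
qed

lemma max_abelian_is_line:
  assumes "max_abelian s0 a"
  obtains u where "u \<noteq> 0" "a = L ` span {u}"
proof -
  have a: "subspace a" "a \<subseteq> s0" "\<forall>X\<in>a. \<forall>Y\<in>a. X ** Y - Y ** X = 0"
    and maximal: "\<And>b. subspace b \<Longrightarrow> a \<subseteq> b \<Longrightarrow> b \<subseteq> s0 \<Longrightarrow> \<forall>X\<in>b. \<forall>Y\<in>b. X ** Y - Y ** X = 0
                      \<Longrightarrow> b = a"
    using assms unfolding max_abelian_def by blast+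
  have line: "subspace (L ` span {u})" "L ` span {u} \<subseteq> s0" for u
    using linear_subspace_image[OF linear_L subspace_span] range_L by auto
  have L_eq_0: "L x = 0 \<longleftrightarrow> x = 0" for x
    using inj_L linear_0[OF linear_L] by (metis injD)
  have "\<exists>X\<in>a. X \<noteq> 0"
  proof (rule ccontr)
    assume "\<not> (\<exists>X\<in>a. X \<noteq> 0)"
    moreover obtain b :: 'v where "b \<in> Basis" by (meson ex_in_conv nonempty_Basis)
    ultimately have "a \<subseteq> L ` span {b}"
      using linear_0[OF linear_L] span_zero by (force intro: image_eqI[where x = 0])
    then have "L ` span {b} = a" using maximal line abelian_line by blast
    then have "L b \<in> a" by (auto intro: span_base)
    then show False using \<open>\<not> (\<exists>X\<in>a. X \<noteq> 0)\<close> \<open>b \<in> Basis\<close> L_eq_0 nonzero_Basis by blast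
  qed
  then obtain u where "L u \<in> a" "u \<noteq> 0" using a(2) range_L L_eq_0 by blast
  have "a \<subseteq> L ` span {u}"
  proof
    fix Y assume "Y \<in> a"
    then obtain y where "Y = L y" using a(2) range_L by blast
    then obtain c where "y = c *\<^sub>R u"
      using a(3) \<open>Y \<in> a\<close> \<open>L u \<in> a\<close> \<open>u \<noteq> 0\<close> commute_iff_parallel by blast
    then show "Y \<in> L ` span {u}" using \<open>Y = L y\<close> by (auto simp: span_singleton)
  qed
  moreover have "L ` span {u} \<subseteq> a"
    using \<open>L u \<in> a\<close> subspace_scale[OF a(1)] by (auto simp: span_singleton linear_scale[OF linear_L])
  ultimately show ?thesis using that \<open>u \<noteq> 0\<close> by blast
qed

lemma sum3_lines: "sum3 (L ` span {u1}) (L ` span {u2}) (L ` span {u3}) = L ` span {u1, u2, u3}"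
proof (intro equalityI subsetI)
  have L_sum: "L (x + y + z) = L x + L y + L z" for x y z by (simp add: linear_add[OF linear_L])
  fix X
  show "X \<in> L ` span {u1, u2, u3}" if X: "X \<in> sum3 (L ` span {u1}) (L ` span {u2}) (L ` span {u3})"
  proof -
    obtain x y z where "X = L x + L y + L z" "x \<in> span {u1}" "y \<in> span {u2}" "z \<in> span {u3}"
      using X unfolding sum3_def by blast
    moreover have "x + y + z \<in> span {u1, u2, u3}" using calculation(2-4) unfolding span_three by blast
    ultimately show ?thesis using L_sum by (metis image_eqI)
  qed
  show "X \<in> sum3 (L ` span {u1}) (L ` span {u2}) (L ` span {u3})" if X: "X \<in> L ` span {u1, u2, u3}"
  proof -
    obtain x y z where "X = L (x + y + z)" "x \<in> span {u1}" "y \<in> span {u2}" "z \<in> span {u3}"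
      using X unfolding span_three by blast
    then show ?thesis unfolding sum3_def L_sum by blast
  qed
qed

lemma dim_sum3_lines: "dim (sum3 (L ` span {u1}) (L ` span {u2}) (L ` span {u3})) = dim {u1, u2, u3}"
  using dim_image_eq[OF linear_L inj_on_subset[OF inj_L subset_UNIV]] by (simp add: sum3_lines)

lemma decomp_holds_lines_iff:
  "decomp_holds s0 K0 (L ` span {u1}) (L ` span {u2}) (L ` span {u3}) \<longleftrightarrow>
     (\<forall>y1 y2 y3. \<exists>k\<in>K0. \<exists>c1 c2 c3. \<exists>T\<in>s0. L y1 = Ad k (L (c1 *\<^sub>R u1)) + T
                 \<and> L y2 = Ad k (L (c2 *\<^sub>R u2)) + T \<and> L y3 = Ad k (L (c3 *\<^sub>R u3)) + T)"
proof -
  let ?RHS = "{(Ad k X1 + T, Ad k X2 + T, Ad k X3 + T) | k X1 X2 X3 T.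
                k \<in> K0 \<and> X1 \<in> L ` span {u1} \<and> X2 \<in> L ` span {u2} \<and> X3 \<in> L ` span {u3} \<and> T \<in> s0}"
  have RHS_iff: "(Y1, Y2, Y3) \<in> ?RHS \<longleftrightarrow> (\<exists>k\<in>K0. \<exists>c1 c2 c3. \<exists>T\<in>s0.
          Y1 = Ad k (L (c1 *\<^sub>R u1)) + T \<and> Y2 = Ad k (L (c2 *\<^sub>R u2)) + T \<and> Y3 = Ad k (L (c3 *\<^sub>R u3)) + T)"
    for Y1 Y2 Y3 unfolding span_singleton by blast
  have L_in_s0: "L x \<in> s0" for x using range_L by blast
  have "?RHS \<subseteq> s0 \<times> s0 \<times> s0"
    using RHS_iff Ad_K_in_s0 L_in_s0 subspace_add[OF subspace_s0] by fastforce
  then have "decomp_holds s0 K0 (L ` span {u1}) (L ` span {u2}) (L ` span {u3}) \<longleftrightarrow> s0 \<times> s0 \<times> s0 \<subseteq> ?RHS"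
    unfolding decomp_holds_def by blast
  moreover have "range L \<times> range L \<times> range L \<subseteq> R \<longleftrightarrow> (\<forall>y1 y2 y3. (L y1, L y2, L y3) \<in> R)" for R
    by auto
  ultimately have "decomp_holds s0 K0 (L ` span {u1}) (L ` span {u2}) (L ` span {u3})
                     \<longleftrightarrow> (\<forall>y1 y2 y3. (L y1, L y2, L y3) \<in> ?RHS)"
    by (simp add: range_L)
  then show ?thesis unfolding RHS_iff .
qed

lemma decomp_holds_iff_differences:
  "decomp_holds s0 K0 (L ` span {u1}) (L ` span {u2}) (L ` span {u3}) \<longleftrightarrow>
     (\<forall>y2 y3. \<exists>k\<in>K0. \<exists>c1 c2 c3. L y2 = Ad k (L (c2 *\<^sub>R u2 - c1 *\<^sub>R u1))
                                  \<and> L y3 = Ad k (L (c3 *\<^sub>R u3 - c1 *\<^sub>R u1)))"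
  unfolding decomp_holds_lines_iff
proof (intro iffI allI)
  have Ad_L_diff: "Ad k (L (x - y)) = Ad k (L x) - Ad k (L y)" for k x y
    by (simp add: linear_diff[OF linear_L] linear_diff[OF linear_Ad])
  fix y2 y3
  assume "\<forall>y1 y2 y3. \<exists>k\<in>K0. \<exists>c1 c2 c3. \<exists>T\<in>s0. L y1 = Ad k (L (c1 *\<^sub>R u1)) + T
            \<and> L y2 = Ad k (L (c2 *\<^sub>R u2)) + T \<and> L y3 = Ad k (L (c3 *\<^sub>R u3)) + T"
  then obtain k c1 c2 c3 T where "k \<in> K0" "L 0 = Ad k (L (c1 *\<^sub>R u1)) + T"
      "L y2 = Ad k (L (c2 *\<^sub>R u2)) + T" "L y3 = Ad k (L (c3 *\<^sub>R u3)) + T"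
    by blast
  moreover from this(2) have "T = - Ad k (L (c1 *\<^sub>R u1))"
    by (simp add: linear_0[OF linear_L] eq_neg_iff_add_eq_0 add.commute)
  ultimately show "\<exists>k\<in>K0. \<exists>c1 c2 c3. L y2 = Ad k (L (c2 *\<^sub>R u2 - c1 *\<^sub>R u1))
                             \<and> L y3 = Ad k (L (c3 *\<^sub>R u3 - c1 *\<^sub>R u1))"
    unfolding Ad_L_diff by auto
next
  fix y1 y2 y3
  assume "\<forall>y2 y3. \<exists>k\<in>K0. \<exists>c1 c2 c3. L y2 = Ad k (L (c2 *\<^sub>R u2 - c1 *\<^sub>R u1))
            \<and> L y3 = Ad k (L (c3 *\<^sub>R u3 - c1 *\<^sub>R u1))"
  then obtain k c1 c2 c3 where "k \<in> K0" and
      d: "L (y2 - y1) = Ad k (L (c2 *\<^sub>R u2 - c1 *\<^sub>R u1))" "L (y3 - y1) = Ad k (L (c3 *\<^sub>R u3 - c1 *\<^sub>R u1))"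
    by blast
  define T where "T = L y1 - Ad k (L (c1 *\<^sub>R u1))"
  have "T \<in> s0"
    unfolding T_def using Ad_K_in_s0[OF \<open>k \<in> K0\<close>] subspace_diff[OF subspace_s0] range_L by blast
  moreover have "L y2 = Ad k (L (c2 *\<^sub>R u2)) + T" "L y3 = Ad k (L (c3 *\<^sub>R u3)) + T"
    using d unfolding T_def linear_diff[OF linear_L] linear_diff[OF linear_Ad]
    by (simp_all add: algebra_simps)
  ultimately show "\<exists>k\<in>K0. \<exists>c1 c2 c3. \<exists>T\<in>s0. L y1 = Ad k (L (c1 *\<^sub>R u1)) + T
                    \<and> L y2 = Ad k (L (c2 *\<^sub>R u2)) + T \<and> L y3 = Ad k (L (c3 *\<^sub>R u3)) + T"
    using \<open>k \<in> K0\<close> by (force simp: T_def)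
qed

lemma decomp_holds_if_dim_2:
  assumes "u1 \<noteq> 0" "u2 \<noteq> 0" "u3 \<noteq> 0" "dim {u1, u2, u3} = 2"
  shows "decomp_holds s0 K0 (L ` span {u1}) (L ` span {u2}) (L ` span {u3})"
  unfolding decomp_holds_iff_differences
proof (intro allI)
  fix y2 y3
  obtain g c1 c2 c3 where g: "g \<in> plane_rotation_group"
      "g (c2 *\<^sub>R u2 - c1 *\<^sub>R u1) = y2" "g (c3 *\<^sub>R u3 - c1 *\<^sub>R u1) = y3"
    using plane_rotation_group_onto_differences[OF assms] by blast
  obtain k where "k \<in> K0" "\<forall>x. Ad k (L x) = L (g x)"
    using plane_rotation_group_realized[OF g(1)] by blast
  with g(2,3) show "\<exists>k\<in>K0. \<exists>c1 c2 c3. L y2 = Ad k (L (c2 *\<^sub>R u2 - c1 *\<^sub>R u1))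
                               \<and> L y3 = Ad k (L (c3 *\<^sub>R u3 - c1 *\<^sub>R u1))"
    by metis
qed

lemma not_decomp_holds_if_dim_1:
  assumes "u1 \<noteq> 0" "dim {u1, u2, u3} = 1"
  shows "\<not> decomp_holds s0 K0 (L ` span {u1}) (L ` span {u2}) (L ` span {u3})"
proof
  assume "decomp_holds s0 K0 (L ` span {u1}) (L ` span {u2}) (L ` span {u3})"
  obtain B :: "'v set" where "B \<subseteq> Basis" "card B = 2"
    using obtain_subset_with_card_n[OF two_le_DIM] by blast
  then obtain b1 b2 :: 'v where b: "b1 \<in> Basis" "b2 \<in> Basis" "b1 \<noteq> b2" by (metis card_2_iff insert_subset)
  have "span {u1} = span {u1, u2, u3}" by (rule dim_eq_span) (use assms in auto)
  then obtain s2 s3 where "u2 = s2 *\<^sub>R u1" "u3 = s3 *\<^sub>R u1"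
    by (metis insertCI span_base span_singleton rangeE)
  moreover obtain k c1 c2 c3 where
    "L b1 = Ad k (L (c2 *\<^sub>R u2 - c1 *\<^sub>R u1))" "L b2 = Ad k (L (c3 *\<^sub>R u3 - c1 *\<^sub>R u1))"
    using \<open>decomp_holds _ _ _ _ _\<close> unfolding decomp_holds_iff_differences by blast
  ultimately have Lb: "L b1 = (c2 * s2 - c1) *\<^sub>R Ad k (L u1)" "L b2 = (c3 * s3 - c1) *\<^sub>R Ad k (L u1)"
    by (simp_all add: algebra_simps linear_diff[OF linear_L] linear_scale[OF linear_L]
                      linear_diff[OF linear_Ad] linear_scale[OF linear_Ad])
  then have "L ((c3 * s3 - c1) *\<^sub>R b1) = L ((c2 * s2 - c1) *\<^sub>R b2)"
    by (simp add: linear_scale[OF linear_L])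
  then have "(c3 * s3 - c1) *\<^sub>R b1 = (c2 * s2 - c1) *\<^sub>R b2" using inj_L by (simp add: inj_eq)
  then have "((c3 * s3 - c1) *\<^sub>R b1) \<bullet> b1 = ((c2 * s2 - c1) *\<^sub>R b2) \<bullet> b1"
    "((c3 * s3 - c1) *\<^sub>R b1) \<bullet> b2 = ((c2 * s2 - c1) *\<^sub>R b2) \<bullet> b2" by simp_all
  then have "c3 * s3 - c1 = 0" "c2 * s2 - c1 = 0"
    using b by (simp_all add: inner_not_same_Basis inner_commute[of b1 b2])
  then have "L b1 = 0" using Lb(1) by simp
  then show False using b(1) inj_L linear_0[OF linear_L] by (metis injD nonzero_Basis)
qed

lemma not_decomp_holds_if_dim_3:
  assumes "dim {u1, u2, u3} = 3"
  shows "\<not> decomp_holds s0 K0 (L ` span {u1}) (L ` span {u2}) (L ` span {u3})"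
proof
  assume "decomp_holds s0 K0 (L ` span {u1}) (L ` span {u2}) (L ` span {u3})"
  obtain b :: 'v where "b \<in> Basis" by (meson ex_in_conv nonempty_Basis)
  then obtain k c1 c2 c3 where "k \<in> K0" and
    b: "L b = Ad k (L (c2 *\<^sub>R u2 - c1 *\<^sub>R u1))" "L (2 *\<^sub>R b) = Ad k (L (c3 *\<^sub>R u3 - c1 *\<^sub>R u1))"
    using \<open>decomp_holds _ _ _ _ _\<close> unfolding decomp_holds_iff_differences by blast
  then have "Ad k (L (c3 *\<^sub>R u3 - c1 *\<^sub>R u1)) = Ad k (L (2 *\<^sub>R (c2 *\<^sub>R u2 - c1 *\<^sub>R u1)))"
    by (simp add: linear_scale[OF linear_L] linear_scale[OF linear_Ad])
  then have "c3 *\<^sub>R u3 - c1 *\<^sub>R u1 = 2 *\<^sub>R (c2 *\<^sub>R u2 - c1 *\<^sub>R u1)"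
    using inj_Ad[OF invertible_K[OF \<open>k \<in> K0\<close>]] inj_L by (simp add: inj_eq)
  moreover have "c1 *\<^sub>R u1 + (- 2 * c2) *\<^sub>R u2 + c3 *\<^sub>R u3
                   = (c3 *\<^sub>R u3 - c1 *\<^sub>R u1) - 2 *\<^sub>R (c2 *\<^sub>R u2 - c1 *\<^sub>R u1)"
    by (simp add: algebra_simps) (simp add: scaleR_left_distrib[symmetric])
  ultimately have "c1 *\<^sub>R u1 + (- 2 * c2) *\<^sub>R u2 + c3 *\<^sub>R u3 = 0" by simp
  then have "c1 = 0 \<and> c2 = 0" using dim_three_eq_3_coeffs_zero[OF assms, of c1 "- 2 * c2" c3] by simp
  then have "L b = 0" using b(1) by (simp add: linear_0[OF linear_L] linear_0[OF linear_Ad])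
  then show False using \<open>b \<in> Basis\<close> inj_L linear_0[OF linear_L] by (metis injD nonzero_Basis)
qed

theorem lemma_for_holds: "lemma_for s0 K0"
  unfolding lemma_for_def
proof (intro allI impI)
  fix a1 a2 a3 assume "max_abelian s0 a1 \<and> max_abelian s0 a2 \<and> max_abelian s0 a3"
  then obtain u1 u2 u3 where u: "u1 \<noteq> 0" "u2 \<noteq> 0" "u3 \<noteq> 0"
      and a: "a1 = L ` span {u1}" "a2 = L ` span {u2}" "a3 = L ` span {u3}"
    by (metis max_abelian_is_line)
  have "dim {u1} \<le> dim {u1, u2, u3}" by (rule dim_subset) auto
  moreover have "dim {u1, u2, u3} \<le> card {u1, u2, u3}" by (rule dim_le_card') simp
  moreover have "card {u1, u2, u3} \<le> 3" by (simp add: card_insert_if)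
  ultimately consider "dim {u1, u2, u3} = 1" | "dim {u1, u2, u3} = 2" | "dim {u1, u2, u3} = 3"
    using u(1) by fastforce
  then show "decomp_holds s0 K0 a1 a2 a3 \<longleftrightarrow> dim (sum3 a1 a2 a3) = 2"
    unfolding a dim_sum3_lines
    by cases (use u decomp_holds_if_dim_2 not_decomp_holds_if_dim_1 not_decomp_holds_if_dim_3 in auto)
qed

end

section \<open>SL(2, R)\<close>

lemma mat2_eq: "(X::'a^2^2) = Y \<longleftrightarrow> X$1$1 = Y$1$1 \<and> X$1$2 = Y$1$2 \<and> X$2$1 = Y$2$1 \<and> X$2$2 = Y$2$2"
  by (auto simp: vec_eq_iff forall_2)

lemma vec2_eq: "(x::'a^2) = y \<longleftrightarrow> x$1 = y$1 \<and> x$2 = y$2"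
  by (auto simp: vec_eq_iff forall_2)

lemma inner_vec2: "(x::real^2) \<bullet> y = x$1 * y$1 + x$2 * y$2"
  by (simp add: inner_vec_def sum_2)

definition s_SL2R_param :: "real^2 \<Rightarrow> real^2^2" where
  "s_SL2R_param x = (\<chi> i j. if i = 1 \<and> j = 1 then x$1 else if i = 2 \<and> j = 2 then - x$1 else x$2)"

lemma s_SL2R_param_nth [simp]:
  "s_SL2R_param x $ 1 $ 1 = x$1" "s_SL2R_param x $ 1 $ 2 = x$2"
  "s_SL2R_param x $ 2 $ 1 = x$2" "s_SL2R_param x $ 2 $ 2 = - x$1"
  by (simp_all add: s_SL2R_param_def)

lemma linear_s_SL2R_param: "linear s_SL2R_param"
  by (rule linearI) (simp_all add: mat2_eq)

lemma inj_s_SL2R_param: "inj s_SL2R_param"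
  by (rule injI) (simp add: mat2_eq vec2_eq)

lemma range_s_SL2R_param: "range s_SL2R_param = s_SL2R"
proof
  show "range s_SL2R_param \<subseteq> s_SL2R"
    by (auto simp: s_SL2R_def sl2R_def trace_def sum_2 mat2_eq transpose_def)
  show "s_SL2R \<subseteq> range s_SL2R_param"
  proof
    fix X assume "X \<in> s_SL2R"
    then have "X$1$1 + X$2$2 = 0" "transpose X $ 2 $ 1 = X $ 2 $ 1"
      by (auto simp: s_SL2R_def sl2R_def trace_def sum_2)
    then have "X = s_SL2R_param (vector [X$1$1, X$1$2])" by (simp add: mat2_eq transpose_def)
    then show "X \<in> range s_SL2R_param" by blast
  qed
qed

lemma s_SL2R_param_commute_iff:
  "s_SL2R_param u ** s_SL2R_param w - s_SL2R_param w ** s_SL2R_param u = 0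
     \<longleftrightarrow> u = 0 \<or> (\<exists>c. w = c *\<^sub>R u)"
proof -
  have "s_SL2R_param u ** s_SL2R_param w - s_SL2R_param w ** s_SL2R_param u = 0
          \<longleftrightarrow> (\<forall>i j. u$i * w$j = w$i * u$j)"
    by (simp add: mat2_eq matrix_matrix_mult_def sum_2 forall_2 algebra_simps)
  then show ?thesis using vec_products_symmetric_iff_parallel by simp
qed

lemma K_SL2R_iff: "k \<in> K_SL2R \<longleftrightarrow> transpose k ** k = mat 1 \<and> det k = 1"
  by (auto simp: K_SL2R_def SL2R_def)

lemma Ad_K_SL2R_in_s_SL2R:
  assumes "k \<in> K_SL2R" "X \<in> s_SL2R"
  shows "Ad k X \<in> s_SL2R"
proof -
  have k: "transpose k ** k = mat 1" using assms(1) by (simp add: K_SL2R_iff)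
  have "trace X = 0" "transpose X = X" using assms(2) by (auto simp: s_SL2R_def sl2R_def)
  moreover have "trace (k ** X ** transpose k) = trace X"
    using k by (metis matrix_mul_assoc matrix_mul_lid trace_mul_sym)
  ultimately show ?thesis unfolding Ad_orthogonal[OF k]
    by (simp add: s_SL2R_def sl2R_def matrix_transpose_mul matrix_mul_assoc)
qed

(* sg = 1 or sg = -1 according to the orientation of the frame (e, f). *)
lemma plane_rotation_vec2:
  fixes e f x :: "real^2"
  assumes "orthonormal_pair e f"
  defines "sg \<equiv> e$1 * f$2 - e$2 * f$1"
  shows "sg\<^sup>2 = 1"
    and "plane_rotation e f t x = vector [cos t * x$1 - sg * sin t * x$2, sg * sin t * x$1 + cos t * x$2]"
proof -
  have h: "e$1*e$1 + e$2*e$2 = 1" "f$1*f$1 + f$2*f$2 = 1" "e$1*f$1 + e$2*f$2 = 0"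
    using assms(1) by (auto simp: orthonormal_pair_def inner_vec2)
  have s2: "sg * sg = 1" using h unfolding sg_def by algebra
  then show "sg\<^sup>2 = 1" by (simp add: power2_eq_square)
  have f: "f$1 = - sg * e$2" "f$2 = sg * e$1" using h unfolding sg_def by algebra+
  have "(plane_rotation e f t x)$1 = cos t * x$1 - sg * sin t * x$2"
       "(plane_rotation e f t x)$2 = sg * sin t * x$1 + cos t * x$2"
    unfolding plane_rotation_def inner_vec2 using h(1) s2 f by (simp, algebra)+
  then show "plane_rotation e f t x = vector [cos t * x$1 - sg * sin t * x$2, sg * sin t * x$1 + cos t * x$2]"
    by (simp add: vec2_eq)
qed

lemma plane_rotation_realized_SL2R:
  assumes "orthonormal_pair e f"
  shows "\<exists>k\<in>K_SL2R. \<forall>x. Ad k (s_SL2R_param x) = s_SL2R_param (plane_rotation e f t x)"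
proof -
  define sg where "sg = e$1 * f$2 - e$2 * f$1"
  have "sg = 1 \<or> sg = -1"
    using plane_rotation_vec2(1)[OF assms] by (simp add: sg_def power2_eq_1_iff)
  then have sg_t: "cos (sg * t) = cos t" "sin (sg * t) = sg * sin t" by auto
  \<comment> \<open>Conjugation by the rotation matrix of angle \<theta> rotates the parameter plane by 2\<theta>.\<close>
  define C where "C = cos (sg * t / 2)"
  define S where "S = sin (sg * t / 2)"
  have CS: "C*C - S*S = cos t" "2*S*C = sg * sin t" "C*C + S*S = 1"
    using cos_double[of "sg * t / 2"] sin_double[of "sg * t / 2"] sin_cos_squared_add3[of "sg * t / 2"]
    by (simp_all add: C_def S_def sg_t power2_eq_square algebra_simps)
  define k :: "real^2^2" where "k = vector [vector [C, -S], vector [S, C]]"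
  have k_nth: "k$1$1 = C" "k$1$2 = -S" "k$2$1 = S" "k$2$2 = C" by (simp_all add: k_def)
  have k_orth: "transpose k ** k = mat 1"
    using CS(3) by (simp add: mat2_eq matrix_matrix_mult_def sum_2 transpose_def k_nth mat_def algebra_simps)
  moreover have "det k = 1" using CS(3) by (simp add: det_2 k_nth)
  ultimately have "k \<in> K_SL2R" by (simp add: K_SL2R_iff)
  moreover have "Ad k (s_SL2R_param x) = s_SL2R_param (plane_rotation e f t x)" for x
  proof -
    have "k ** s_SL2R_param x ** transpose k
            = s_SL2R_param (vector [(C*C - S*S) * x$1 - (2*S*C) * x$2, (2*S*C) * x$1 + (C*C - S*S) * x$2])"
      by (simp add: mat2_eq matrix_matrix_mult_def sum_2 transpose_def k_nth algebra_simps)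
    then show ?thesis
      unfolding Ad_orthogonal[OF k_orth] plane_rotation_vec2(2)[OF assms] sg_def[symmetric] CS(1,2) .
  qed
  ultimately show ?thesis by blast
qed

lemma rank_one_model_SL2R: "rank_one_model s_SL2R K_SL2R s_SL2R_param"
proof (rule rank_one_model.intro[OF linear_s_SL2R_param inj_s_SL2R_param range_s_SL2R_param
                                     s_SL2R_param_commute_iff])
  show "invertible k" if "k \<in> K_SL2R" for k
    using that by (simp add: K_SL2R_iff invertible_orthogonal)
  show "k ** k' \<in> K_SL2R" if "k \<in> K_SL2R" "k' \<in> K_SL2R" for k k'
    using that by (simp add: K_SL2R_iff det_mul orthogonal_mult)
qed (simp_all add: K_SL2R_iff Ad_K_SL2R_in_s_SL2R plane_rotation_realized_SL2R)

section \<open>SL(2, C)\<close>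

lemma vec3_eq: "(x::'a^3) = y \<longleftrightarrow> x$1 = y$1 \<and> x$2 = y$2 \<and> x$3 = y$3"
  by (auto simp: vec_eq_iff forall_3)

lemma inner_vec3: "(x::real^3) \<bullet> y = x$1 * y$1 + x$2 * y$2 + x$3 * y$3"
  by (simp add: inner_vec_def sum_3)

lemma ctrans_mult: "ctrans (A ** B) = ctrans B ** ctrans (A :: complex^'n^'n)"
  by (simp add: ctrans_def matrix_matrix_mult_def vec_eq_iff mult.commute)

lemma ctrans_mat_1 [simp]: "ctrans (mat 1 :: complex^'n^'n) = mat 1"
  by (simp add: ctrans_def vec_eq_iff mat_def)

(* x1 \<sigma>1 + x2 \<sigma>2 + x3 \<sigma>3 in terms of the Pauli matrices \<sigma>i. *)
definition s_SL2C_param :: "real^3 \<Rightarrow> complex^2^2" where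
  "s_SL2C_param x = (\<chi> i j. if i = 1 \<and> j = 1 then complex_of_real (x$3)
                             else if i = 2 \<and> j = 2 then - complex_of_real (x$3)
                             else if i = 1 then Complex (x$1) (- x$2) else Complex (x$1) (x$2))"

lemma s_SL2C_param_nth [simp]:
  "s_SL2C_param x $ 1 $ 1 = complex_of_real (x$3)" "s_SL2C_param x $ 1 $ 2 = Complex (x$1) (- x$2)"
  "s_SL2C_param x $ 2 $ 1 = Complex (x$1) (x$2)" "s_SL2C_param x $ 2 $ 2 = - complex_of_real (x$3)"
  by (simp_all add: s_SL2C_param_def)

lemma linear_s_SL2C_param: "linear s_SL2C_param"
  by (rule linearI) (simp_all add: mat2_eq complex_eq_iff)

lemma inj_s_SL2C_param: "inj s_SL2C_param"
  by (rule injI) (simp add: mat2_eq vec3_eq complex_eq_iff)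

lemma range_s_SL2C_param: "range s_SL2C_param = s_SL2C"
proof
  show "range s_SL2C_param \<subseteq> s_SL2C"
    by (auto simp: s_SL2C_def sl2C_def trace_def sum_2 mat2_eq ctrans_def complex_eq_iff)
  show "s_SL2C \<subseteq> range s_SL2C_param"
  proof
    fix X assume "X \<in> s_SL2C"
    then have "X$1$1 + X$2$2 = 0" "ctrans X $ 1 $ 1 = X $ 1 $ 1" "ctrans X $ 1 $ 2 = X $ 1 $ 2"
      by (auto simp: s_SL2C_def sl2C_def trace_def sum_2)
    then have "X = s_SL2C_param (vector [Re (X$2$1), Im (X$2$1), Re (X$1$1)])"
      by (simp add: mat2_eq complex_eq_iff ctrans_def)
    then show "X \<in> range s_SL2C_param" by blast
  qed
qed

lemma s_SL2C_param_commute_iff: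
  "s_SL2C_param u ** s_SL2C_param w - s_SL2C_param w ** s_SL2C_param u = 0
     \<longleftrightarrow> u = 0 \<or> (\<exists>c. w = c *\<^sub>R u)"
proof -
  have "s_SL2C_param u ** s_SL2C_param w - s_SL2C_param w ** s_SL2C_param u = 0
          \<longleftrightarrow> u$1*w$2 = w$1*u$2 \<and> u$3*w$1 = w$3*u$1 \<and> u$3*w$2 = w$3*u$2"
    by (simp add: mat2_eq matrix_matrix_mult_def sum_2 complex_eq_iff algebra_simps)
       (auto simp: algebra_simps)
  also have "\<dots> \<longleftrightarrow> (\<forall>i j. u$i * w$j = w$i * u$j)" by (auto simp: forall_3 algebra_simps)
  finally show ?thesis using vec_products_symmetric_iff_parallel by simp
qed

lemma K_SL2C_iff: "k \<in> K_SL2C \<longleftrightarrow> ctrans k ** k = mat 1 \<and> det k = 1"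
  by (auto simp: K_SL2C_def SL2C_def)

lemma Ad_unitary: "ctrans k ** k = mat 1 \<Longrightarrow> Ad k X = k ** X ** ctrans k"
  by (simp add: Ad_eq_conj_right_inverse matrix_left_right_inverse)

lemma Ad_K_SL2C_in_s_SL2C:
  assumes "k \<in> K_SL2C" "X \<in> s_SL2C"
  shows "Ad k X \<in> s_SL2C"
proof -
  have k: "ctrans k ** k = mat 1" using assms(1) by (simp add: K_SL2C_iff)
  have "trace X = 0" "ctrans X = X" using assms(2) by (auto simp: s_SL2C_def sl2C_def)
  moreover have "trace (k ** X ** ctrans k) = trace X"
    using k by (metis matrix_mul_assoc matrix_mul_lid trace_mul_sym)
  moreover have "ctrans (ctrans k) = k" by (simp add: ctrans_def vec_eq_iff)
  ultimately show ?thesis unfolding Ad_unitary[OF k]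
    by (simp add: s_SL2C_def sl2C_def ctrans_mult matrix_mul_assoc)
qed

(* C - i S (n1 \<sigma>1 + n2 \<sigma>2 + n3 \<sigma>3), which is exp (-i t/2 (n \<cdot> \<sigma>)) when C = cos (t/2) and S = sin (t/2);
   for n = e \<times> f its adjoint action is the rotation by t in the plane of e and f. *)
definition SU2_rotation :: "real \<Rightarrow> real \<Rightarrow> real \<Rightarrow> real \<Rightarrow> real \<Rightarrow> complex^2^2" where
  "SU2_rotation C S n1 n2 n3 =
     (\<chi> i j. if i = 1 \<and> j = 1 then Complex C (- S*n3) else if i = 2 \<and> j = 2 then Complex C (S*n3)
             else if i = 1 then Complex (- S*n2) (- S*n1) else Complex (S*n2) (- S*n1))"

lemma SU2_rotation_nth [simp]:
  "SU2_rotation C S n1 n2 n3 $ 1 $ 1 = Complex C (- S*n3)"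
  "SU2_rotation C S n1 n2 n3 $ 1 $ 2 = Complex (- S*n2) (- S*n1)"
  "SU2_rotation C S n1 n2 n3 $ 2 $ 1 = Complex (S*n2) (- S*n1)"
  "SU2_rotation C S n1 n2 n3 $ 2 $ 2 = Complex C (S*n3)"
  by (simp_all add: SU2_rotation_def)

lemma SU2_rotation_conj:
  fixes e f x :: "real^3"
  assumes "orthonormal_pair e f"
  defines "n1 \<equiv> e$2*f$3 - e$3*f$2" and "n2 \<equiv> e$3*f$1 - e$1*f$3" and "n3 \<equiv> e$1*f$2 - e$2*f$1"
  assumes CS: "C*C + S*S = 1" and double: "cos (2*t) = C*C - S*S" "sin (2*t) = 2*S*C"
  shows "SU2_rotation C S n1 n2 n3 ** s_SL2C_param x ** ctrans (SU2_rotation C S n1 n2 n3)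
           = s_SL2C_param (plane_rotation e f (2 * t) x)"
proof -
  have h: "e$1*e$1 + e$2*e$2 + e$3*e$3 = 1" "f$1*f$1 + f$2*f$2 + f$3*f$3 = 1"
      "e$1*f$1 + e$2*f$2 + e$3*f$3 = 0"
    using assms(1) by (auto simp: orthonormal_pair_def inner_vec3)
  show ?thesis
    unfolding plane_rotation_def inner_vec3 double
    apply (simp add: mat2_eq matrix_matrix_mult_def sum_2 ctrans_def complex_eq_iff n1_def n2_def n3_def)
    using h CS
    apply (intro conjI)
       apply (simp add: algebra_simps | algebra)+
    done
qed

lemma plane_rotation_realized_SL2C:
  fixes e f :: "real^3"
  assumes "orthonormal_pair e f"
  shows "\<exists>k\<in>K_SL2C. \<forall>x. Ad k (s_SL2C_param x) = s_SL2C_param (plane_rotation e f t x)"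
proof -
  define n1 where "n1 = e$2*f$3 - e$3*f$2"
  define n2 where "n2 = e$3*f$1 - e$1*f$3"
  define n3 where "n3 = e$1*f$2 - e$2*f$1"
  have "n1*n1 + n2*n2 + n3*n3 = 1"
    using assms unfolding n1_def n2_def n3_def orthonormal_pair_def inner_vec3 by algebra
  define C where "C = cos (t/2)"
  define S where "S = sin (t/2)"
  have CS: "C*C + S*S = 1" "cos (2*(t/2)) = C*C - S*S" "sin (2*(t/2)) = 2*S*C"
    using cos_double[of "t/2"] sin_double[of "t/2"] by (simp_all add: C_def S_def power2_eq_square)
  define k where "k = SU2_rotation C S n1 n2 n3"
  have k_unitary: "ctrans k ** k = mat 1"
    unfolding k_def using CS(1) \<open>n1*n1 + n2*n2 + n3*n3 = 1\<close>
    apply (simp add: mat2_eq matrix_matrix_mult_def sum_2 ctrans_def complex_eq_iff mat_def)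
    apply (intro conjI | simp add: algebra_simps | algebra)+
    done
  moreover have "det k = 1"
    unfolding k_def using CS(1) \<open>n1*n1 + n2*n2 + n3*n3 = 1\<close>
    apply (simp add: det_2 complex_eq_iff)
    apply (simp add: algebra_simps | algebra)+
    done
  ultimately have "k \<in> K_SL2C" by (simp add: K_SL2C_iff)
  moreover have "Ad k (s_SL2C_param x) = s_SL2C_param (plane_rotation e f t x)" for x
    using SU2_rotation_conj[OF assms CS, of x] unfolding Ad_unitary[OF k_unitary]
    by (simp add: k_def n1_def n2_def n3_def)
  ultimately show ?thesis by blast
qed

lemma rank_one_model_SL2C: "rank_one_model s_SL2C K_SL2C s_SL2C_param"
proof (rule rank_one_model.intro[OF linear_s_SL2C_param inj_s_SL2C_param range_s_SL2C_param
                                     s_SL2C_param_commute_iff])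
  show "invertible k" if "k \<in> K_SL2C" for k
    using that unfolding K_SL2C_iff invertible_def by (metis matrix_left_right_inverse)
  show "k ** k' \<in> K_SL2C" if "k \<in> K_SL2C" "k' \<in> K_SL2C" for k k'
  proof -
    have "ctrans (k ** k') ** (k ** k') = ctrans k' ** (ctrans k ** k) ** k'"
      by (simp add: ctrans_mult matrix_mul_assoc)
    then show ?thesis using that by (simp add: K_SL2C_iff det_mul)
  qed
qed (simp_all add: K_SL2C_iff Ad_K_SL2C_in_s_SL2C plane_rotation_realized_SL2C)

section \<open>SO_e(n, 1)\<close>

lemma all_option: "(\<forall>a. P a) \<longleftrightarrow> P None \<and> (\<forall>i. P (Some i))"
  by (metis option.exhaust)

lemma sum_UNIV_option: "(\<Sum>c\<in>UNIV. g c) = g None + (\<Sum>j\<in>UNIV. g (Some j :: 'n::finite option))"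
proof -
  have "(\<Sum>c\<in>UNIV. g c) = (\<Sum>c\<in>insert None (Some ` UNIV). g c)" by (simp add: UNIV_option_conv)
  also have "\<dots> = g None + (\<Sum>j\<in>UNIV. g (Some j))" by (simp add: sum.reindex)
  finally show ?thesis .
qed

lemma matrix_mult_option_nth:
  "((A :: 'a::comm_semiring_1^('n::finite option)^'m) ** B) $ a $ b
     = A$a$None * B$None$b + (\<Sum>j\<in>UNIV. A$a$Some j * B$Some j$b)"
  unfolding matrix_matrix_mult_def by (simp add: sum_UNIV_option)

lemma matrix_option_eq:
  "(X :: 'a^('n::finite option)^('n option)) = Y \<longleftrightarrow>
     X$None$None = Y$None$None \<and> (\<forall>j. X$None$Some j = Y$None$Some j) \<and>
     (\<forall>i. X$Some i$None = Y$Some i$None) \<and> (\<forall>i j. X$Some i$Some j = Y$Some i$Some j)"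
  by (auto simp: vec_eq_iff all_option)

definition J_diag :: "'n option \<Rightarrow> real" where "J_diag a = (if a = None then -1 else 1)"

lemma Jform_nth: "(Jform :: real^('n::finite option)^('n option)) $ i $ j = (if i = j then J_diag i else 0)"
  by (simp add: Jform_def J_diag_def)

lemma Jform_mult_nth: "(Jform ** X) $ a $ b = J_diag a * X $ a $ (b::'n::finite option)"
  unfolding matrix_matrix_mult_def Jform_nth by (simp add: if_distrib if_distribR cong: if_cong)

lemma mult_Jform_nth: "(X ** Jform) $ a $ b = X $ a $ b * J_diag (b::'n::finite option)"
  unfolding matrix_matrix_mult_def Jform_nth by (simp add: if_distrib if_distribR cong: if_cong)

lemma transpose_Jform: "transpose (Jform :: real^('n::finite option)^('n option)) = Jform"
  by (simp add: vec_eq_iff transpose_def Jform_nth)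

definition s_SOe_param :: "real^'n::finite \<Rightarrow> real^('n option)^('n option)" where
  "s_SOe_param u = (\<chi> a b. case (a, b) of (None, Some j) \<Rightarrow> u$j | (Some i, None) \<Rightarrow> u$i | _ \<Rightarrow> 0)"

lemma s_SOe_param_nth [simp]:
  "s_SOe_param u $ None $ None = 0" "s_SOe_param u $ None $ Some j = u $ j"
  "s_SOe_param u $ Some i $ None = u $ i" "s_SOe_param u $ Some i $ Some j = 0"
  by (simp_all add: s_SOe_param_def)

definition rotation_block :: "real^'n::finite^'n \<Rightarrow> real^('n option)^('n option)" where
  "rotation_block Q = (\<chi> a b. case (a, b) of (None, None) \<Rightarrow> 1 | (Some i, Some j) \<Rightarrow> Q$i$j | _ \<Rightarrow> 0)"

lemma rotation_block_nth [simp]: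
  "rotation_block Q $ None $ None = 1" "rotation_block Q $ None $ Some j = 0"
  "rotation_block Q $ Some i $ None = 0" "rotation_block Q $ Some i $ Some j = Q $ i $ j"
  by (simp_all add: rotation_block_def)

lemma rotation_block_mult: "rotation_block A ** rotation_block B = rotation_block (A ** B)"
  by (simp add: matrix_option_eq matrix_mult_option_nth, simp add: matrix_matrix_mult_def)

lemma transpose_rotation_block: "transpose (rotation_block Q) = rotation_block (transpose Q)"
  by (simp add: matrix_option_eq transpose_def)

lemma rotation_block_mat_1: "rotation_block (mat 1) = mat 1"
  by (simp add: matrix_option_eq mat_def)

lemma Jform_rotation_block: "Jform ** rotation_block Q = rotation_block Q ** Jform"
  by (simp add: matrix_option_eq Jform_mult_nth mult_Jform_nth J_diag_def)

lemma rotation_block_conj: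
  "rotation_block Q ** s_SOe_param x ** transpose (rotation_block Q) = s_SOe_param (Q *v x)"
  by (simp add: transpose_rotation_block matrix_option_eq matrix_mult_option_nth matrix_vector_mult_def
                transpose_def mult.commute)

lemma linear_s_SOe_param: "linear s_SOe_param"
  by (rule linearI) (simp_all add: matrix_option_eq)

lemma inj_s_SOe_param: "inj s_SOe_param"
  by (rule injI) (simp add: matrix_option_eq vec_eq_iff)

lemma s_SOe_param_in_s_SOe: "s_SOe_param u \<in> s_SOe"
  by (simp add: s_SOe_def so_n1_def matrix_option_eq Jform_mult_nth mult_Jform_nth J_diag_def transpose_def)

lemma range_s_SOe_param: "range s_SOe_param = s_SOe"
proof
  show "range s_SOe_param \<subseteq> s_SOe" using s_SOe_param_in_s_SOe by auto
  show "s_SOe \<subseteq> range s_SOe_param"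
  proof
    fix X :: "real^('n::finite option)^('n option)" assume "X \<in> s_SOe"
    then have sym: "X $ b $ a = X $ a $ b" and so: "X $ b $ a * J_diag b + J_diag a * X $ a $ b = 0" for a b
      by (auto simp: s_SOe_def so_n1_def vec_eq_iff transpose_def Jform_mult_nth mult_Jform_nth
               dest!: arg_cong[where f = "\<lambda>M. M $ a $ b"])
    have "X $ None $ None = 0" "X $ Some i $ Some j = 0" for i j
      using so[of None None] so[of "Some i" "Some j"] sym[of "Some i" "Some j"] by (simp_all add: J_diag_def)
    then have "X = s_SOe_param (\<chi> j. X $ None $ Some j)" using sym by (simp add: matrix_option_eq)
    then show "X \<in> range s_SOe_param" by blast
  qed
qed

lemma s_SOe_param_commute_iff:
  "s_SOe_param u ** s_SOe_param w - s_SOe_param w ** s_SOe_param u = 0 \<longleftrightarrow> u = 0 \<or> (\<exists>c. w = c *\<^sub>R u)"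
proof -
  have "s_SOe_param u ** s_SOe_param w - s_SOe_param w ** s_SOe_param u = 0
          \<longleftrightarrow> (\<forall>i j. u$i * w$j = w$i * u$j)"
    by (simp add: matrix_option_eq matrix_mult_option_nth mult.commute)
  then show ?thesis using vec_products_symmetric_iff_parallel by simp
qed

lemma K_SOe_iff:
  "k \<in> K_SOe \<longleftrightarrow> transpose k ** k = mat 1 \<and> transpose k ** Jform ** k = Jform \<and> det k = 1 \<and> k $ None $ None > 0"
  by (auto simp: K_SOe_def SOe_def)

lemma K_SOe_commutes_Jform:
  assumes "k \<in> K_SOe"
  shows "Jform ** k = k ** Jform"
proof -
  have k: "transpose k ** k = mat 1" "k ** transpose k = mat 1" "transpose k ** Jform ** k = Jform"
    using assms by (auto simp: K_SOe_iff matrix_left_right_inverse)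
  have "Jform ** k = (k ** transpose k) ** Jform ** k" using k by simp
  also have "\<dots> = k ** (transpose k ** Jform ** k)" by (simp add: matrix_mul_assoc)
  finally show ?thesis using k by simp
qed

lemma K_SOe_None_Some: "k \<in> K_SOe \<Longrightarrow> k $ None $ Some j = 0"
  using arg_cong[OF K_SOe_commutes_Jform, of k "\<lambda>M. M $ None $ Some j"]
  by (simp add: Jform_mult_nth mult_Jform_nth J_diag_def)

lemma Ad_K_SOe_in_s_SOe:
  assumes "k \<in> K_SOe" "X \<in> s_SOe"
  shows "Ad k X \<in> s_SOe"
proof -
  have k: "transpose k ** k = mat 1" "Jform ** k = k ** Jform"
    using assms(1) K_SOe_commutes_Jform by (auto simp: K_SOe_iff)
  then have kT: "transpose k ** Jform = Jform ** transpose k"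
    by (metis matrix_transpose_mul transpose_Jform)
  have "transpose X = X" "X ** Jform + Jform ** X = 0" using assms(2) by (auto simp: s_SOe_def so_n1_def)
  moreover have "(k ** X ** transpose k) ** Jform + Jform ** (k ** X ** transpose k)
                   = k ** (X ** Jform + Jform ** X) ** transpose k"
    using k(2) kT by (simp add: matrix_add_ldistrib matrix_add_rdistrib matrix_mul_assoc)
                     (metis matrix_mul_assoc)
  ultimately show ?thesis unfolding Ad_orthogonal[OF k(1)]
    by (simp add: s_SOe_def so_n1_def matrix_transpose_mul matrix_mul_assoc)
qed

lemma mult_in_K_SOe:
  assumes "k \<in> K_SOe" "k' \<in> K_SOe"
  shows "k ** k' \<in> K_SOe"
proof -
  have "transpose (k ** k') ** Jform ** (k ** k') = transpose k' ** (transpose k ** Jform ** k) ** k'"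
    by (simp add: matrix_transpose_mul matrix_mul_assoc)
  moreover have "(k ** k') $ None $ None = k $ None $ None * k' $ None $ None"
    using K_SOe_None_Some[OF assms(1)] by (simp add: matrix_mult_option_nth)
  ultimately show ?thesis using assms by (simp add: K_SOe_iff orthogonal_mult det_mul)
qed

lemma plane_rotation_realized_SOe:
  fixes e f :: "real^'n::finite"
  assumes o: "orthonormal_pair e f"
  shows "\<exists>k\<in>K_SOe. \<forall>x. Ad k (s_SOe_param x) = s_SOe_param (plane_rotation e f t x)"
proof -
  have orth: "orthogonal_matrix (matrix (plane_rotation e f s) :: real^'n^'n)" for s
    using orthogonal_transformation_matrix linear_plane_rotation norm_plane_rotation[OF o]
    unfolding orthogonal_transformation by blast
  define Q :: "real^'n^'n" where "Q = matrix (plane_rotation e f t)"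
  define k where "k = rotation_block Q"
  have k_orth: "transpose k ** k = mat 1"
    using orth[of t] by (simp add: k_def Q_def transpose_rotation_block rotation_block_mult
                                 orthogonal_matrix_def rotation_block_mat_1)
  have "transpose k ** Jform ** k = (transpose k ** k) ** Jform"
    by (simp add: k_def Jform_rotation_block flip: matrix_mul_assoc)
  \<comment> \<open>det k is the square of the determinant of the half-angle rotation block, hence 1.\<close>
  moreover have "det k = 1"
  proof -
    define k2 where "k2 = rotation_block (matrix (plane_rotation e f (t/2)) :: real^'n^'n)"
    have "plane_rotation e f (t/2) \<circ> plane_rotation e f (t/2) = plane_rotation e f t"
      using plane_rotation_add[OF o, of "t/2" "t/2"] by (auto simp: fun_eq_iff)
    then have "k = k2 ** k2"
      using matrix_compose[OF linear_plane_rotation linear_plane_rotation, of e f "t/2" e f "t/2"]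
      by (simp add: k_def k2_def Q_def rotation_block_mult)
    moreover have "orthogonal_matrix k2"
      using orth[of "t/2"] by (simp add: k2_def orthogonal_matrix_def transpose_rotation_block
                                         rotation_block_mult rotation_block_mat_1)
    ultimately show ?thesis using det_orthogonal_matrix[of k2] by (auto simp: det_mul)
  qed
  ultimately have "k \<in> K_SOe" using k_orth by (simp add: K_SOe_iff k_def)
  moreover have "Ad k (s_SOe_param x) = s_SOe_param (plane_rotation e f t x)" for x
  proof -
    have "Ad k (s_SOe_param x) = s_SOe_param (Q *v x)"
      unfolding Ad_orthogonal[OF k_orth] unfolding k_def by (rule rotation_block_conj)
    then show ?thesis by (simp add: Q_def matrix_works linear_plane_rotation)
  qed
  ultimately show ?thesis by blast
qed

lemma rank_one_model_SOe:
  assumes "CARD('n::finite) \<ge> 2"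
  shows "rank_one_model (s_SOe :: (real^('n option)^('n option)) set) K_SOe s_SOe_param"
proof (rule rank_one_model.intro[OF linear_s_SOe_param inj_s_SOe_param range_s_SOe_param
                                     s_SOe_param_commute_iff])
  show "invertible k" if "k \<in> K_SOe" for k :: "real^('n option)^('n option)"
    using that by (simp add: K_SOe_iff invertible_orthogonal)
  have "(mat 1 :: real^('n option)^('n option)) $ None $ None = 1" by (simp add: mat_def)
  then show "mat 1 \<in> (K_SOe :: (real^('n option)^('n option)) set)" by (simp add: K_SOe_iff)
qed (use assms in \<open>simp_all add: mult_in_K_SOe Ad_K_SOe_in_s_SOe plane_rotation_realized_SOe\<close>)

theorem lemma7p2:
  assumes "CARD('n::finite) \<ge> 2"
  shows "lemma_for s_SL2R K_SL2R
       \<and> lemma_for s_SL2C K_SL2C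
       \<and> lemma_for (s_SOe :: (real^('n option)^('n option)) set) K_SOe"
  using rank_one_model.lemma_for_holds[OF rank_one_model_SL2R]
        rank_one_model.lemma_for_holds[OF rank_one_model_SL2C]
        rank_one_model.lemma_for_holds[OF rank_one_model_SOe[OF assms]]
  by blast

end
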